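(* Let $M\in\mathcal{D}_2$. Then the set $E_M\coloneqq\{z\in M:\ \operatorname{card}(\operatorname{Tan}(M,z)\cap S^1)=1\}$ is discrete.
   Context: A function on an open convex set $C\subset\mathbb{R}^d$ is DC if it is the difference of two convex functions on $C$. $\mathcal{D}_2$ denotes the family consisting of $\varnothing$ together with all nonempty closed sets $A\subset\mathbb{R}^2$ whose distance function $d_A=\operatorname{dist}(\cdot,A)$ is DC on $\mathbb{R}^2$. $S^1$ is the unit circle in $\mathbb{R}^2$. The tangent cone $\operatorname{Tan}(A,a)$ consists of all $u$ such that $u=\lim_{i\to\infty}r_i(a_i-a)$ for some $r_i>0$ and $a_i\in A$ with $a_i\to a$. A set $D\subset\mathbb{R}^2$ is discrete if each point of $\mathbb{R}^2$ has a neighbourhood containing at most one point of $D$. *)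

theory Defs
  imports "HOL-Analysis.Analysis"
begin

definition DC_on :: "('a::real_vector) set \<Rightarrow> ('a \<Rightarrow> real) \<Rightarrow> bool" where
  "DC_on C f \<longleftrightarrow> (\<exists>g h. convex_on C g \<and> convex_on C h \<and> (\<forall>x\<in>C. f x = g x - h x))"

definition D2 :: "(real^2) set set" where
  "D2 = {A. A = {} \<or> (closed A \<and> DC_on UNIV (\<lambda>x. infdist x A))}"

definition Tan :: "('a::real_normed_vector) set \<Rightarrow> 'a \<Rightarrow> 'a set" where
  "Tan A a = {u. \<exists>r::nat \<Rightarrow> real. \<exists>s::nat \<Rightarrow> 'a.
      (\<forall>i. r i > 0 \<and> s i \<in> A) \<and> s \<longlonglongrightarrow> a \<and> (\<lambda>i. r i *\<^sub>R (s i - a)) \<longlonglongrightarrow> u}"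

definition discrete_set :: "('a::topological_space) set \<Rightarrow> bool" where
  "discrete_set D \<longleftrightarrow> (\<forall>x. \<exists>U. open U \<and> x \<in> U \<and> (\<forall>p\<in>U \<inter> D. \<forall>q\<in>U \<inter> D. p = q))"

end

theory Submission
  imports Defs
begin

(* Write d_M = g - h with g, h convex. At a point z of M with a unique tangent direction u, d_M
   grows near z at least like the distance to the ray R_+ u, and that distance dominates the linear
   function v |-> d . v for every d in the ball B(-u/2, 1/2). Adding a subgradient q of h at z,
   convexity of g turns this local growth into the statement that the whole ball B(q - u/2, 1/2)
   consists of subgradients of g at z. Monotonicity of the subdifferential forces the centres of
   such balls at distinct points to be at least 1 apart, while subgradients of g are bounded over
   bounded sets; hence every bounded set contains only finitely many such points. *)

definition subdifferential :: "('a::real_inner \<Rightarrow> real) \<Rightarrow> 'a \<Rightarrow> 'a set" where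
  "subdifferential g z = {p. \<forall>y. g z + p \<bullet> (y - z) \<le> g y}"

lemma graph_point_notin_rel_interior_epigraph:
  fixes h :: "'a::euclidean_space \<Rightarrow> real"
  assumes "convex_on UNIV h"
  shows "(z, h z) \<notin> rel_interior (epigraph UNIV h)"
proof
  assume "(z, h z) \<in> rel_interior (epigraph UNIV h)"
  moreover have "(z, h z + 1) \<in> affine hull (epigraph UNIV h)"
    by (intro hull_inc) (simp add: mem_epigraph)
  ultimately obtain e :: real where "e > 1"
    "(1 - e) *\<^sub>R (z, h z + 1) + e *\<^sub>R (z, h z) \<in> epigraph UNIV h"
    using convex_rel_interior_if2[OF convex_epigraphI[OF assms]] by blast
  then show False by (simp add: mem_epigraph algebra_simps)
qed

lemma subdifferential_nonempty:
  fixes h :: "'a::euclidean_space \<Rightarrow> real"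
  assumes "convex_on UNIV h"
  shows "subdifferential h z \<noteq> {}"
proof -
  let ?S = "epigraph UNIV h"
  have "(z, h z) \<in> closure ?S"
    using closure_subset by (fastforce simp: mem_epigraph)
  then obtain a where "a \<noteq> 0" and a: "\<And>w. w \<in> closure ?S \<Longrightarrow> a \<bullet> (z, h z) \<le> a \<bullet> w"
    using supporting_hyperplane_relative_frontier[OF convex_epigraphI[OF assms]]
      graph_point_notin_rel_interior_epigraph[OF assms] by metis
  obtain p \<alpha> where a_eq: "a = (p, \<alpha>)" by fastforce
  have supp: "p \<bullet> z + \<alpha> * h z \<le> p \<bullet> y + \<alpha> * t" if "h y \<le> t" for y t
    using a[OF closure_subset[THEN subsetD], of "(y, t)"] that by (simp add: a_eq mem_epigraph)
  have "\<alpha> \<noteq> 0"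
  proof
    assume "\<alpha> = 0"
    then have "p \<bullet> p \<le> 0" using supp[of "z - p" "h (z - p)"] by (simp add: inner_diff_right)
    then show False
      using \<open>a \<noteq> 0\<close> \<open>\<alpha> = 0\<close>
      by (simp add: a_eq zero_prod_def inner_gt_zero_iff[symmetric] not_le[symmetric])
  qed
  moreover have "\<alpha> \<ge> 0" using supp[of z "h z + 1"] by (simp add: algebra_simps)
  ultimately have "\<alpha> > 0" by simp
  have "h z + (- (1 / \<alpha>) *\<^sub>R p) \<bullet> (y - z) \<le> h y" for y
  proof -
    have "p \<bullet> (z - y) \<le> \<alpha> * (h y - h z)"
      using supp[of y "h y"] by (simp add: inner_diff_right algebra_simps)
    then have "p \<bullet> (z - y) / \<alpha> \<le> h y - h z"
      using \<open>\<alpha> > 0\<close> by (simp add: pos_divide_le_eq mult.commute)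
    moreover have "(- (1 / \<alpha>) *\<^sub>R p) \<bullet> (y - z) = p \<bullet> (z - y) / \<alpha>"
      by (simp add: inner_diff_right divide_simps)
    ultimately show ?thesis by simp
  qed
  then have "- (1 / \<alpha>) *\<^sub>R p \<in> subdifferential h z"
    unfolding subdifferential_def by blast
  then show ?thesis by blast
qed

lemma subdifferential_monotone:
  assumes "p1 \<in> subdifferential g z1" "p2 \<in> subdifferential g z2"
  shows "0 \<le> (p1 - p2) \<bullet> (z1 - z2)"
proof -
  have "g z1 + p1 \<bullet> (z2 - z1) \<le> g z2" "g z2 + p2 \<bullet> (z1 - z2) \<le> g z1"
    using assms by (auto simp: subdifferential_def)
  then show ?thesis by (simp add: inner_diff_left inner_diff_right inner_commute)
qed

lemma cball_subdifferential_centres_separated: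
  fixes g :: "'a::real_inner \<Rightarrow> real"
  assumes "cball c1 r \<subseteq> subdifferential g z1" "cball c2 r \<subseteq> subdifferential g z2" "z1 \<noteq> z2"
  shows "2 * r \<le> dist c1 c2"
proof (cases "r < 0")
  case False
  define w where "w = z1 - z2"
  define e where "e = (1 / norm w) *\<^sub>R w"
  have "norm w > 0" using \<open>z1 \<noteq> z2\<close> by (simp add: w_def)
  then have "norm e = 1" "e \<bullet> w = norm w"
    by (simp_all add: e_def power2_norm_eq_inner[symmetric] power2_eq_square)
  \<comment> \<open>monotonicity applied to the extreme points of the two balls in the direction w\<close>
  have "c1 - r *\<^sub>R e \<in> subdifferential g z1" "c2 + r *\<^sub>R e \<in> subdifferential g z2"
    using assms(1,2) False \<open>norm e = 1\<close> by (auto simp: dist_norm)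
  then have "0 \<le> ((c1 - r *\<^sub>R e) - (c2 + r *\<^sub>R e)) \<bullet> w"
    unfolding w_def by (rule subdifferential_monotone)
  then have "2 * r * norm w \<le> (c1 - c2) \<bullet> w"
    using \<open>e \<bullet> w = norm w\<close> by (simp add: inner_diff_left inner_add_left algebra_simps)
  also have "\<dots> \<le> dist c1 c2 * norm w"
    using norm_cauchy_schwarz[of "c1 - c2" w] by (simp add: dist_norm)
  finally show ?thesis using \<open>norm w > 0\<close> by simp
qed (use zero_le_dist[of c1 c2] in linarith)

lemma subdifferential_bounded:
  fixes g :: "'a::euclidean_space \<Rightarrow> real"
  assumes "convex_on UNIV g" "bounded S"
  shows "bounded (\<Union>z\<in>S. subdifferential g z)"
proof -
  obtain R where R: "\<And>z. z \<in> S \<Longrightarrow> norm z \<le> R"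
    using assms(2) unfolding bounded_iff by blast
  have "continuous_on (cball 0 (R + 1)) g"
    using convex_on_continuous[OF open_UNIV assms(1)] continuous_on_subset by blast
  then have "bounded (g ` cball 0 (R + 1))"
    by (intro compact_imp_bounded compact_continuous_image compact_cball)
  then obtain K where K: "\<And>y. y \<in> cball 0 (R + 1) \<Longrightarrow> \<bar>g y\<bar> \<le> K"
    unfolding bounded_real by blast
  have "norm p \<le> 2 * K" if "z \<in> S" "p \<in> subdifferential g z" for z p
  proof -
    have z: "z \<in> cball 0 (R + 1)" using R[OF that(1)] by simp
    show ?thesis
    proof (cases "p = 0")
      case True
      then show ?thesis using K[OF z] by simp
    next
      case False
      define y where "y = z + (1 / norm p) *\<^sub>R p"
      have "norm y \<le> norm z + norm ((1 / norm p) *\<^sub>R p)"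
        unfolding y_def by (rule norm_triangle_ineq)
      then have "y \<in> cball 0 (R + 1)" using R[OF that(1)] False by simp
      moreover have "g z + p \<bullet> (y - z) \<le> g y"
        using that(2) by (simp add: subdifferential_def)
      moreover have "p \<bullet> (y - z) = norm p"
        using False by (simp add: y_def dot_square_norm power2_eq_square)
      ultimately show ?thesis using K[OF z] K[of y] by linarith
    qed
  qed
  then show ?thesis unfolding bounded_iff by blast
qed

lemma discrete_set_if_no_limit_points:
  assumes "\<And>x. \<not> x islimpt D"
  shows "discrete_set D"
  unfolding discrete_set_def
proof
  fix x
  obtain U where "open U" "x \<in> U" "\<And>y. y \<in> U \<Longrightarrow> y \<in> D \<Longrightarrow> y = x"
    using assms[of x] unfolding islimpt_def by blast
  then show "\<exists>U. open U \<and> x \<in> U \<and> (\<forall>p\<in>U \<inter> D. \<forall>q\<in>U \<inter> D. p = q)" by blast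
qed

lemma discrete_set_if_cballs_in_subdifferential:
  fixes g :: "'a::euclidean_space \<Rightarrow> real"
  assumes "convex_on UNIV g" "r > 0"
    and c: "\<And>z. z \<in> E \<Longrightarrow> cball (c z) r \<subseteq> subdifferential g z"
  shows "discrete_set E"
proof (rule discrete_set_if_no_limit_points)
  fix x
  have sep: "2 * r \<le> dist (c z1) (c z2)" if "z1 \<in> E" "z2 \<in> E" "z1 \<noteq> z2" for z1 z2
    using cball_subdifferential_centres_separated c that by blast
  let ?F = "E \<inter> cball x 1"
  have "uniform_discrete (c ` ?F)"
    using sep \<open>r > 0\<close> by (intro uniformI2[of "2 * r"]) auto
  moreover have "c ` ?F \<subseteq> (\<Union>z\<in>cball x 1. subdifferential g z)"
    using c \<open>r > 0\<close> by fastforce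
  then have "bounded (c ` ?F)"
    using subdifferential_bounded[OF assms(1) bounded_cball] bounded_subset by blast
  ultimately have "finite (c ` ?F)" using uniform_discrete_finite_iff by blast
  moreover have "inj_on c ?F"
  proof (rule inj_onI)
    fix z1 z2 assume "z1 \<in> ?F" "z2 \<in> ?F" "c z1 = c z2"
    then show "z1 = z2" using sep[of z1 z2] \<open>r > 0\<close> by fastforce
  qed
  ultimately have "finite ?F" using finite_imageD by blast
  then show "\<not> x islimpt E"
    using islimpt_eq_infinite_cball zero_less_one by blast
qed

lemma zero_in_Tan: "a \<in> A \<Longrightarrow> 0 \<in> Tan A a"
  unfolding Tan_def by (intro CollectI exI[of _ "\<lambda>_. 1"] exI[of _ "\<lambda>_. a"]) simp

lemma Tan_scaleR:
  assumes "w \<in> Tan A a" "c > 0"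
  shows "c *\<^sub>R w \<in> Tan A a"
proof -
  obtain r s where "\<forall>i. r i > 0 \<and> s i \<in> A" "s \<longlonglongrightarrow> a" "(\<lambda>i. r i *\<^sub>R (s i - a)) \<longlonglongrightarrow> w"
    using assms(1) unfolding Tan_def by blast
  moreover have "(\<lambda>i. (c * r i) *\<^sub>R (s i - a)) \<longlonglongrightarrow> c *\<^sub>R w"
    using tendsto_scaleR[OF tendsto_const calculation(3), of c] by simp
  ultimately show ?thesis
    unfolding Tan_def using \<open>c > 0\<close>
    by (intro CollectI exI[of _ "\<lambda>i. c * r i"] exI[of _ s]) simp
qed

lemma Tan_eq_ray:
  assumes "Tan A a \<inter> sphere 0 1 = {u}" "w \<in> Tan A a"
  shows "w = norm w *\<^sub>R u"
proof (cases "w = 0")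
  case False
  then have "(1 / norm w) *\<^sub>R w \<in> Tan A a \<inter> sphere 0 1"
    using Tan_scaleR[OF assms(2)] by simp
  then show ?thesis using assms(1) False by auto
qed simp

lemma cball_half_subset_half_ball:
  fixes u :: "'a::real_inner"
  assumes "norm u = 1"
  shows "cball (- (1/2) *\<^sub>R u) (1/2) \<subseteq> {d. norm d \<le> 1 \<and> d \<bullet> u \<le> 0}"
proof
  fix d assume "d \<in> cball (- (1/2) *\<^sub>R u) (1/2)"
  then have le: "norm (d + (1/2) *\<^sub>R u) \<le> 1/2" by (simp add: dist_commute dist_norm)
  have "norm d \<le> norm (d + (1/2) *\<^sub>R u) + norm ((1/2) *\<^sub>R u)"
    using norm_triangle_ineq4[of "d + (1/2) *\<^sub>R u" "(1/2) *\<^sub>R u"] by simp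
  with le assms have "norm d \<le> 1" by simp
  have "d \<bullet> d + d \<bullet> u + 1/4 = norm (d + (1/2) *\<^sub>R u) ^ 2"
    using dot_square_norm[of u] assms
    by (simp add: dot_square_norm[symmetric] inner_add_left inner_add_right inner_commute)
  also have "\<dots> \<le> (1/2) ^ 2" using le by (intro power_mono) simp_all
  finally have "d \<bullet> d + d \<bullet> u \<le> 0" by (simp add: power2_eq_square)
  then have "d \<bullet> u \<le> 0" using inner_ge_zero[of d] by linarith
  with \<open>norm d \<le> 1\<close> show "d \<in> {d. norm d \<le> 1 \<and> d \<bullet> u \<le> 0}" by simp
qed

lemma inner_le_dist_to_ray:
  fixes d u v :: "'a::real_inner"
  assumes "norm d \<le> 1" "d \<bullet> u \<le> 0" "s \<ge> 0"
  shows "d \<bullet> v \<le> norm (v - s *\<^sub>R u)"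
proof -
  have "d \<bullet> v = d \<bullet> (v - s *\<^sub>R u) + s * (d \<bullet> u)" by (simp add: inner_diff_right)
  also have "\<dots> \<le> norm d * norm (v - s *\<^sub>R u)"
    using norm_cauchy_schwarz[of d "v - s *\<^sub>R u"] mult_nonneg_nonpos[OF assms(3,2)] by linarith
  also have "\<dots> \<le> norm (v - s *\<^sub>R u)" using assms(1) by (simp add: mult_left_le_one_le)
  finally show ?thesis .
qed

lemma inner_le_infdist_Tan:
  assumes "a \<in> A" "Tan A a \<inter> sphere 0 1 = {u}" "norm d \<le> 1" "d \<bullet> u \<le> 0"
  shows "d \<bullet> v \<le> infdist v (Tan A a)"
proof -
  have "Tan A a \<noteq> {}" using zero_in_Tan[OF assms(1)] by blast
  then show ?thesis
    unfolding infdist_notempty[OF \<open>Tan A a \<noteq> {}\<close>]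
  proof (rule cINF_greatest)
    fix w assume "w \<in> Tan A a"
    then show "d \<bullet> v \<le> dist v w"
      using inner_le_dist_to_ray[OF assms(3,4) norm_ge_zero, of v w] Tan_eq_ray[OF assms(2)]
      by (simp add: dist_norm)
  qed
qed

lemma exists_step_infdist_ge_infdist_Tan:
  fixes A :: "'a::{real_normed_vector,heine_borel} set"
  assumes "z \<in> A" "\<delta> < infdist v (Tan A z)"
  shows "\<exists>t. 0 < t \<and> t \<le> 1 \<and> t * \<delta> \<le> infdist (z + t *\<^sub>R v) A"
proof (rule ccontr)
  \<comment> \<open>otherwise the rescaled near points w i converge along a subsequence to a tangent vector
    within distance \<delta> of v\<close>
  assume far: "\<not> ?thesis"
  define t where "t i = inverse (real (Suc i))" for i
  have t: "0 < t i" "t i \<le> 1" for i by (simp_all add: t_def inverse_le_1_iff)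
  have "\<exists>y\<in>A. dist (z + t i *\<^sub>R v) y < t i * \<delta>" for i
  proof -
    have "infdist (z + t i *\<^sub>R v) A < t i * \<delta>" using far t[of i] by (meson not_le)
    moreover have "A \<noteq> {}" using \<open>z \<in> A\<close> by blast
    ultimately show ?thesis
      using cInf_lessD[of "dist (z + t i *\<^sub>R v) ` A" "t i * \<delta>"] by (simp add: infdist_notempty)
  qed
  then obtain y where y: "\<And>i. y i \<in> A" "\<And>i. dist (z + t i *\<^sub>R v) (y i) < t i * \<delta>"
    by metis
  define w where "w i = (1 / t i) *\<^sub>R (y i - z)" for i
  have y_eq: "y i = z + t i *\<^sub>R w i" for i
    using t(1)[of i] by (simp add: w_def)
  have w_close: "norm (v - w i) < \<delta>" for i
  proof -
    have "dist (z + t i *\<^sub>R v) (y i) = t i * norm (v - w i)"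
      using t(1)[of i] by (simp add: y_eq dist_norm flip: scaleR_diff_right)
    then show ?thesis using y(2)[of i] t(1)[of i] by simp
  qed
  then have "w i \<in> cball v \<delta>" for i by (simp add: dist_norm less_imp_le)
  then obtain l \<sigma> where \<sigma>: "strict_mono \<sigma>" and l: "(w \<circ> \<sigma>) \<longlonglongrightarrow> l"
    using compact_imp_seq_compact[OF compact_cball] unfolding seq_compact_def by metis
  have "(t \<circ> \<sigma>) \<longlonglongrightarrow> 0"
    using LIMSEQ_subseq_LIMSEQ[OF LIMSEQ_inverse_real_of_nat \<sigma>] by (simp add: t_def o_def)
  then have "(\<lambda>i. z + t (\<sigma> i) *\<^sub>R w (\<sigma> i)) \<longlonglongrightarrow> z + 0 *\<^sub>R l"
    using l by (intro tendsto_intros) (simp_all add: o_def)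
  then have "(y \<circ> \<sigma>) \<longlonglongrightarrow> z" by (simp add: y_eq o_def)
  moreover have "(\<lambda>i. (1 / t (\<sigma> i)) *\<^sub>R ((y \<circ> \<sigma>) i - z)) \<longlonglongrightarrow> l"
    using l by (simp add: w_def o_def)
  ultimately have "l \<in> Tan A z"
    unfolding Tan_def using t(1) y(1)
    by (intro CollectI exI[of _ "\<lambda>i. 1 / t (\<sigma> i)"] exI[of _ "y \<circ> \<sigma>"]) simp
  moreover have "norm (v - l) \<le> \<delta>"
    using tendsto_norm[OF tendsto_diff[OF tendsto_const l, of v]]
  proof (rule LIMSEQ_le_const2)
    show "\<exists>N. \<forall>i\<ge>N. norm (v - (w \<circ> \<sigma>) i) \<le> \<delta>" using w_close less_imp_le by auto
  qed
  then have "dist v l \<le> \<delta>" by (simp add: dist_norm)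
  ultimately have "infdist v (Tan A z) \<le> \<delta>" by (rule infdist_le2)
  with assms(2) show False by simp
qed

lemma cball_subset_subdifferential_of_DC_infdist:
  fixes M :: "'a::euclidean_space set"
  assumes dc: "\<And>x. infdist x M = g x - h x" and g: "convex_on UNIV g"
    and "z \<in> M" and u: "Tan M z \<inter> sphere 0 1 = {u}" and q: "q \<in> subdifferential h z"
  shows "cball (q - (1/2) *\<^sub>R u) (1/2) \<subseteq> subdifferential g z"
proof
  \<comment> \<open>g (z + t v) - g z = h (z + t v) - h z + d_M (z + t v), which for suitable t \<in> (0, 1] is at
    least t (q \<bullet> v + \<delta>) for any \<delta> < (p - q) \<bullet> v; convexity of g carries this over to t = 1\<close>
  fix p assume "p \<in> cball (q - (1/2) *\<^sub>R u) (1/2)"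
  then have "p - q \<in> cball (- (1/2) *\<^sub>R u) (1/2)" by (simp add: dist_norm algebra_simps)
  moreover have "norm u = 1" using u by auto
  ultimately have d: "norm (p - q) \<le> 1" "(p - q) \<bullet> u \<le> 0"
    using cball_half_subset_half_ball by blast+
  have "g z + p \<bullet> (y - z) \<le> g y" for y
  proof -
    let ?v = "y - z"
    have "\<delta> \<le> g y - g z - q \<bullet> ?v" if "\<delta> < (p - q) \<bullet> ?v" for \<delta>
    proof -
      have "\<delta> < infdist ?v (Tan M z)"
        using that inner_le_infdist_Tan[OF \<open>z \<in> M\<close> u d] by (rule less_le_trans)
      then obtain t where t: "0 < t" "t \<le> 1" "t * \<delta> \<le> infdist (z + t *\<^sub>R ?v) M"
        using exists_step_infdist_ge_infdist_Tan[OF \<open>z \<in> M\<close>] by blast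
      have "(1 - t) *\<^sub>R z + t *\<^sub>R y = z + t *\<^sub>R ?v" by (simp add: algebra_simps)
      then have "g (z + t *\<^sub>R ?v) \<le> (1 - t) * g z + t * g y"
        using convex_onD[OF g, of t z y] t by simp
      moreover have "h z + q \<bullet> ((z + t *\<^sub>R ?v) - z) \<le> h (z + t *\<^sub>R ?v)"
        using q unfolding subdifferential_def by blast
      moreover have "g z = h z" using dc[of z] \<open>z \<in> M\<close> by simp
      ultimately have "t * \<delta> \<le> t * (g y - g z - q \<bullet> ?v)"
        using t(3) dc[of "z + t *\<^sub>R ?v"] by (simp add: algebra_simps)
      then show ?thesis using t(1) by simp
    qed
    then have "(p - q) \<bullet> ?v \<le> g y - g z - q \<bullet> ?v" by (rule dense_le)
    then show ?thesis by (simp add: inner_diff_left)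
  qed
  then show "p \<in> subdifferential g z" by (simp add: subdifferential_def)
qed

theorem proposition5p9:
  fixes M :: "(real^2) set"
  assumes "M \<in> D2"
  shows "discrete_set {z \<in> M. card (Tan M z \<inter> sphere 0 1) = 1}"
proof (cases "M = {}")
  case True
  then show ?thesis unfolding discrete_set_def by blast
next
  case False
  then obtain g h where g: "convex_on UNIV g" and h: "convex_on UNIV h"
    and dc: "\<And>x. infdist x M = g x - h x"
    using assms unfolding D2_def DC_on_def by blast
  let ?E = "{z \<in> M. card (Tan M z \<inter> sphere 0 1) = 1}"
  have "\<forall>z\<in>?E. \<exists>c. cball c (1/2) \<subseteq> subdifferential g z"
  proof
    fix z assume "z \<in> ?E"
    then have "card (Tan M z \<inter> sphere 0 1) = 1" by simp
    then obtain u where "Tan M z \<inter> sphere 0 1 = {u}" by (rule card_1_singletonE)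
    moreover obtain q where "q \<in> subdifferential h z"
      using subdifferential_nonempty[OF h] by blast
    ultimately show "\<exists>c. cball c (1/2) \<subseteq> subdifferential g z"
      using cball_subset_subdifferential_of_DC_infdist[OF dc g] \<open>z \<in> ?E\<close> by blast
  qed
  then obtain c where "\<forall>z\<in>?E. cball (c z) (1/2) \<subseteq> subdifferential g z"
    by (rule bchoice[THEN exE])
  then show ?thesis
    by (intro discrete_set_if_cballs_in_subdifferential[OF g, of "1/2"]) auto
qed

end
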